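(* Under the Physarum dynamics, let $P$ be a path in $G$ from vertex $a$ to vertex $b$, traversed from $a$ to $b$; for each edge $e=(x,y)$ of $P$ in this traversal direction let $\Delta(e)=p_x-p_y$. Let $\Delta(P)=p_a-p_b$, $L(P)=\sum_{e\in P}L_e$ and $W(P)=\sum_{e\in P}L_e\ln D_e$. Then $\dot W(P)=\Delta(P)-L(P)+2\sum_{e\in P:\,\Delta(e)<0}|\Delta(e)|$. If there are real numbers $\bar\Delta$ and $\delta\ge0$ such that for all sufficiently large $t$, $\Delta(P)\le\bar\Delta$ and $\Delta(e)\ge-\delta$ for all $e\in P$, then there is a constant $K$ with $W(P)(t)\le K+(\bar\Delta-L(P)+2n\delta)t$ for all $t\ge0$. If $\Delta(P)\ge\bar\Delta$ for all sufficiently large $t$, then there is a constant $K$ with $W(P)(t)\ge K+(\bar\Delta-L(P))t$ for all $t\ge 0$.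
   Context: Let $G=(N,E)$ be a finite connected undirected graph with $n=|N|$ vertices and two distinct vertices $s_0$ (source) and $s_1$ (sink). Each edge $e$ has a fixed length $L_e>0$. Each edge has a time-dependent diameter $D_e(t)$ with $D_e(0)>0$, and resistance $R_e=L_e/D_e$. At each time $t$, the vertex potentials $p_v$ (normalized by $p_{s_1}=0$) are the solution of $\sum_{u\in\delta(v)}(p_v-p_u)/R_{uv}=b_v$ for all $v$, where $\delta(v)$ is the set of neighbours of $v$, $b_{s_0}=1$, $b_{s_1}=-1$, $b_v=0$ otherwise; for an edge $e=\{u,v\}$ with an arbitrarily fixed orientation $(u,v)$ the current is $Q_e=(p_u-p_v)/R_e=D_e(p_u-p_v)/L_e$. The diameters evolve by $\dot D_e(t)=|Q_e(t)|-D_e(t)$ for all $e\in E$ (the "Physarum dynamics"). Paths are simple. *)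

theory Defs
  imports "HOL-Analysis.Analysis"
begin

definition graph_ok :: "'v set \<Rightarrow> 'v set set \<Rightarrow> 'v \<Rightarrow> 'v \<Rightarrow> bool" where
  "graph_ok N E s0 s1 \<longleftrightarrow> finite N \<and> s0 \<in> N \<and> s1 \<in> N \<and> s0 \<noteq> s1 \<and>
     (\<forall>e\<in>E. \<exists>u v. u \<in> N \<and> v \<in> N \<and> u \<noteq> v \<and> e = {u, v}) \<and>
     (\<forall>u\<in>N. \<forall>v\<in>N. (u, v) \<in> rtrancl {(x, y). {x, y} \<in> E})"

definition nbrs :: "'v set set \<Rightarrow> 'v \<Rightarrow> 'v set" where
  "nbrs E v = {u. {u, v} \<in> E}"

definition node_supply :: "'v \<Rightarrow> 'v \<Rightarrow> 'v \<Rightarrow> real" where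
  "node_supply s0 s1 v = (if v = s0 then 1 else if v = s1 then -1 else 0)"

definition resistance :: "('v set \<Rightarrow> real) \<Rightarrow> ('v set \<Rightarrow> real) \<Rightarrow> 'v set \<Rightarrow> real" where
  "resistance L D e = L e / D e"

definition is_potential :: "'v set \<Rightarrow> 'v set set \<Rightarrow> ('v set \<Rightarrow> real) \<Rightarrow> ('v set \<Rightarrow> real)
    \<Rightarrow> 'v \<Rightarrow> 'v \<Rightarrow> ('v \<Rightarrow> real) \<Rightarrow> bool" where
  "is_potential N E L D s0 s1 p \<longleftrightarrow> p s1 = 0 \<and>
     (\<forall>v\<in>N. (\<Sum>u\<in>nbrs E v. (p v - p u) / resistance L D {u, v}) = node_supply s0 s1 v)"

definition current :: "('v set \<Rightarrow> real) \<Rightarrow> ('v set \<Rightarrow> real) \<Rightarrow> ('v \<Rightarrow> real)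
    \<Rightarrow> ('v set \<Rightarrow> 'v \<times> 'v) \<Rightarrow> 'v set \<Rightarrow> real" where
  "current L D p orient e = (p (fst (orient e)) - p (snd (orient e))) / resistance L D e"

definition is_path :: "'v set set \<Rightarrow> 'v list \<Rightarrow> 'v \<Rightarrow> 'v \<Rightarrow> bool" where
  "is_path E P a b \<longleftrightarrow> P \<noteq> [] \<and> hd P = a \<and> last P = b \<and> distinct P \<and>
     (\<forall>i < length P - 1. {P ! i, P ! Suc i} \<in> E)"

definition path_edge :: "'v list \<Rightarrow> nat \<Rightarrow> 'v set" where
  "path_edge P i = {P ! i, P ! Suc i}"

definition edge_delta :: "('v \<Rightarrow> real) \<Rightarrow> 'v list \<Rightarrow> nat \<Rightarrow> real" where
  "edge_delta p P i = p (P ! i) - p (P ! Suc i)"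

definition path_L :: "('v set \<Rightarrow> real) \<Rightarrow> 'v list \<Rightarrow> real" where
  "path_L L P = (\<Sum>i < length P - 1. L (path_edge P i))"

definition path_W :: "('v set \<Rightarrow> real) \<Rightarrow> ('v set \<Rightarrow> real) \<Rightarrow> 'v list \<Rightarrow> real" where
  "path_W L D P = (\<Sum>i < length P - 1. L (path_edge P i) * ln (D (path_edge P i)))"

end

theory Submission
  imports Defs
begin

(* Since D_e' = |Q_e| - D_e and |Q_e| = |Delta(e)| D_e / L_e, each summand satisfies
   (L_e ln D_e)' = |Delta(e)| - L_e, provided D_e stays positive (which holds because
   (D_e e^t)' = |Q_e| e^t >= 0).  Writing |x| = x + 2 |x| [x < 0] and telescoping the
   potential differences along the path gives W(P)' = Delta(P) - L(P) + 2 B(P), where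
   B(P) is the "backflow" sum of |Delta(e)| over edges traversed against the potential. *)

section \<open>Calculus on the half-line\<close>

lemma increasing_on_halfline:
  fixes f f' :: "real \<Rightarrow> real"
  assumes "0 \<le> a" "a \<le> b"
    and deriv: "\<And>x. x \<ge> 0 \<Longrightarrow> (f has_real_derivative f' x) (at x within {0..})"
    and nonneg: "\<And>x. a \<le> x \<Longrightarrow> x \<le> b \<Longrightarrow> f' x \<ge> 0"
  shows "f a \<le> f b"
proof (rule DERIV_nonneg_imp_increasing_open[OF \<open>a \<le> b\<close>])
  fix x assume x: "a < x" "x < b"
  have "at x within {0<..} = at x"
    using x \<open>0 \<le> a\<close> by (intro at_within_open) auto
  moreover have "(f has_real_derivative f' x) (at x within {0<..})"
    using deriv[of x] x \<open>0 \<le> a\<close> by (auto intro: has_field_derivative_subset)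
  ultimately show "\<exists>y. DERIV f x :> y \<and> y \<ge> 0"
    using nonneg[of x] x by auto
next
  have "continuous_on {0..} f" by (rule DERIV_continuous_on[OF deriv]) auto
  then show "continuous_on {a..b} f"
    by (rule continuous_on_subset) (use \<open>0 \<le> a\<close> in auto)
qed

(* Solutions of f' = g - f with g >= 0 stay positive: f(t) e^t is nondecreasing.
   This keeps the Physarum diameters positive, so ln D_e is differentiable. *)
lemma positive_under_relaxation:
  fixes f g :: "real \<Rightarrow> real"
  assumes f0: "f 0 > 0"
    and deriv: "\<And>x. x \<ge> 0 \<Longrightarrow> (f has_real_derivative (g x - f x)) (at x within {0..})"
    and g_nonneg: "\<And>x. g x \<ge> 0"
    and "t \<ge> 0"
  shows "f t > 0"
proof -
  have "f 0 * exp 0 \<le> f t * exp t"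
  proof (rule increasing_on_halfline[where f = "\<lambda>x. f x * exp x", OF order_refl \<open>t \<ge> 0\<close>])
    fix x :: real assume "x \<ge> 0"
    show "((\<lambda>x. f x * exp x) has_real_derivative (g x * exp x)) (at x within {0..})"
      using DERIV_mult[OF deriv[OF \<open>x \<ge> 0\<close>] DERIV_exp[THEN has_field_derivative_at_within]]
      by (rule DERIV_cong) (simp add: algebra_simps)
  next
    fix x :: real show "g x * exp x \<ge> 0" using g_nonneg[of x] by simp
  qed
  then have "f t * exp t > 0" using f0 by simp
  then show ?thesis by (simp add: zero_less_mult_iff)
qed

(* If W' <= c from some time on, then W(t) <= K + c t for all t >= 0:
   W - c t is bounded on the compact initial segment and nonincreasing afterwards. *)
lemma affine_upper_bound_from_eventual_slope:
  fixes W W' :: "real \<Rightarrow> real"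
  assumes deriv: "\<And>x. x \<ge> 0 \<Longrightarrow> (W has_real_derivative W' x) (at x within {0..})"
    and eventually: "\<exists>T. \<forall>t\<ge>T. W' t \<le> c"
  shows "\<exists>K. \<forall>t\<ge>0. W t \<le> K + c * t"
proof -
  obtain T0 where T0: "\<forall>t\<ge>T0. W' t \<le> c" using eventually by auto
  define T where "T = max T0 0"
  define g where "g t = W t - c * t" for t
  have deriv_g: "(g has_real_derivative (W' x - c)) (at x within {0..})" if "x \<ge> 0" for x
    unfolding g_def using deriv[OF that] by (auto intro!: derivative_eq_intros)
  have "continuous_on {0..} g" by (rule DERIV_continuous_on[OF deriv_g]) auto
  then have "continuous_on {0..T} g" by (rule continuous_on_subset) auto
  then obtain x0 where x0: "x0 \<in> {0..T}" "\<forall>y\<in>{0..T}. g y \<le> g x0"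
    using continuous_attains_sup[of "{0..T}" g] by (auto simp: T_def)
  have bounded: "g t \<le> g x0" if "t \<ge> 0" for t
  proof (cases "t \<le> T")
    case True then show ?thesis using x0 that by auto
  next
    case False
    have "- g T \<le> - g t"
    proof (rule increasing_on_halfline[where f = "\<lambda>x. - g x" and f' = "\<lambda>x. c - W' x"])
      show "0 \<le> T" "T \<le> t" using False by (auto simp: T_def)
      fix x :: real assume "x \<ge> 0"
      show "((\<lambda>x. - g x) has_real_derivative (c - W' x)) (at x within {0..})"
        using DERIV_minus[OF deriv_g[OF \<open>x \<ge> 0\<close>]] by simp
    next
      fix x assume "T \<le> x" then show "0 \<le> c - W' x" using T0 by (auto simp: T_def)
    qed
    moreover have "g T \<le> g x0" using x0(2) by (simp add: T_def)
    ultimately show ?thesis by linarith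
  qed
  have "W t \<le> g x0 + c * t" if "t \<ge> 0" for t
    using bounded[OF that] unfolding g_def by linarith
  then show ?thesis by blast
qed

lemma affine_lower_bound_from_eventual_slope:
  fixes W W' :: "real \<Rightarrow> real"
  assumes deriv: "\<And>x. x \<ge> 0 \<Longrightarrow> (W has_real_derivative W' x) (at x within {0..})"
    and eventually: "\<exists>T. \<forall>t\<ge>T. W' t \<ge> c"
  shows "\<exists>K. \<forall>t\<ge>0. W t \<ge> K + c * t"
proof -
  have "\<exists>K. \<forall>t\<ge>0. - W t \<le> K + (- c) * t"
    by (rule affine_upper_bound_from_eventual_slope[where W' = "\<lambda>x. - W' x"])
       (use deriv eventually in \<open>auto intro: DERIV_minus\<close>)
  then obtain K where "\<And>t. t \<ge> 0 \<Longrightarrow> - W t \<le> K + (- c) * t" by auto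
  then show ?thesis by (intro exI[of _ "- K"]) (auto simp: algebra_simps)
qed

section \<open>Simple paths and the backflow term\<close>

definition backflow :: "('v \<Rightarrow> real) \<Rightarrow> 'v list \<Rightarrow> real" where
  "backflow q P = (\<Sum>i\<in>{i. i < length P - 1 \<and> edge_delta q P i < 0}. \<bar>edge_delta q P i\<bar>)"

lemma backflow_nonneg: "backflow q P \<ge> 0"
proof -
  have "\<bar>edge_delta q P i\<bar> \<ge> 0" for i by simp
  then show ?thesis unfolding backflow_def by (rule sum_nonneg)
qed

lemma backflow_le:
  assumes "\<And>i. i < length P - 1 \<Longrightarrow> edge_delta q P i \<ge> - \<delta>" "\<delta> \<ge> 0"
  shows "backflow q P \<le> real (length P - 1) * \<delta>"
proof -
  define S where "S = {i. i < length P - 1 \<and> edge_delta q P i < 0}"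
  have S_sub: "S \<subseteq> {..<length P - 1}" by (auto simp: S_def)
  have "backflow q P \<le> real (card S) * \<delta>"
    unfolding backflow_def S_def[symmetric]
  proof (rule sum_bounded_above)
    fix i assume "i \<in> S"
    then have "i < length P - 1" "edge_delta q P i < 0" by (auto simp: S_def)
    then show "\<bar>edge_delta q P i\<bar> \<le> \<delta>" using assms(1)[of i] by auto
  qed
  also have "\<dots> \<le> real (length P - 1) * \<delta>"
    using card_mono[OF _ S_sub] \<open>\<delta> \<ge> 0\<close> by (intro mult_right_mono) auto
  finally show ?thesis .
qed

lemma sum_abs_edge_delta:
  assumes "is_path E P a b"
  shows "(\<Sum>i < length P - 1. \<bar>edge_delta q P i\<bar>) = (q a - q b) + 2 * backflow q P"
proof -
  define m where "m = length P - 1"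
  have abs_split: "\<bar>x\<bar> = x + 2 * (if x < 0 then \<bar>x\<bar> else 0)" for x :: real by auto
  have "(\<Sum>i<m. \<bar>edge_delta q P i\<bar>) = (\<Sum>i<m. edge_delta q P i)
      + 2 * (\<Sum>i<m. if edge_delta q P i < 0 then \<bar>edge_delta q P i\<bar> else 0)"
    by (subst abs_split) (simp add: sum.distrib sum_distrib_left)
  also have "(\<Sum>i<m. if edge_delta q P i < 0 then \<bar>edge_delta q P i\<bar> else 0) = backflow q P"
  proof -
    have "{i \<in> {..<m}. edge_delta q P i < 0} = {i. i < length P - 1 \<and> edge_delta q P i < 0}"
      by (auto simp: m_def)
    then show ?thesis
      unfolding backflow_def by (simp flip: sum.inter_filter)
  qed
  also have "(\<Sum>i<m. edge_delta q P i) = q (P ! 0) - q (P ! m)"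
    unfolding edge_delta_def by (rule sum_lessThan_telescope')
  also have "q (P ! 0) - q (P ! m) = q a - q b"
    using assms by (auto simp: is_path_def hd_conv_nth last_conv_nth m_def)
  finally show ?thesis by (simp add: m_def)
qed

(* A simple path has at most n edges: its first length P - 1 vertices are
   distinct and each lies on an edge, hence in N. *)
lemma path_edge_count_le_card:
  assumes graph: "graph_ok N E s0 s1" and path: "is_path E P a b"
  shows "length P - 1 \<le> card N"
proof -
  define m where "m = length P - 1"
  have edges_are_pairs: "\<forall>e\<in>E. \<exists>u v. u \<in> N \<and> v \<in> N \<and> u \<noteq> v \<and> e = {u, v}"
    using graph unfolding graph_ok_def by (elim conjE)
  have vertex_in_N: "x \<in> N" if x_in_e: "x \<in> e" and e_in_E: "e \<in> E" for x e
  proof -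
    obtain u v where "u \<in> N" "v \<in> N" "e = {u, v}" using edges_are_pairs e_in_E by blast
    then show ?thesis using x_in_e by blast
  qed
  have "set (take m P) \<subseteq> N"
  proof
    fix x assume "x \<in> set (take m P)"
    then obtain j where j: "j < m" "x = P ! j"
      by (auto simp: in_set_conv_nth m_def)
    have "path_edge P j \<in> E" using path j(1) by (simp add: is_path_def path_edge_def m_def)
    then show "x \<in> N" unfolding j(2) path_edge_def by (rule vertex_in_N[rotated]) simp
  qed
  moreover have "finite N" using graph by (simp add: graph_ok_def)
  ultimately have "card (set (take m P)) \<le> card N" by (rule card_mono[rotated])
  moreover have "distinct (take m P)" using path by (simp add: is_path_def)
  ultimately show ?thesis by (simp add: distinct_card m_def)
qed

lemma eventual_rate_upper_bound:
  assumes graph: "graph_ok N E s0 s1" and path: "is_path E P a b" and "\<delta> \<ge> 0"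
    and eventually_bounded: "\<exists>T. \<forall>t\<ge>T. q t a - q t b \<le> Dbar \<and>
                              (\<forall>i < length P - 1. edge_delta (q t) P i \<ge> - \<delta>)"
  shows "\<exists>T. \<forall>t\<ge>T. (q t a - q t b) - path_L L P + 2 * backflow (q t) P
                      \<le> Dbar - path_L L P + 2 * real (card N) * \<delta>"
proof -
  obtain T where T: "\<And>t. t \<ge> T \<Longrightarrow> q t a - q t b \<le> Dbar"
    "\<And>t i. t \<ge> T \<Longrightarrow> i < length P - 1 \<Longrightarrow> edge_delta (q t) P i \<ge> - \<delta>"
    using eventually_bounded by blast
  have edges_le_n: "real (length P - 1) * \<delta> \<le> real (card N) * \<delta>"
    using path_edge_count_le_card[OF graph path] \<open>\<delta> \<ge> 0\<close> by (intro mult_right_mono) auto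
  have "(q t a - q t b) - path_L L P + 2 * backflow (q t) P
          \<le> Dbar - path_L L P + 2 * real (card N) * \<delta>" if "t \<ge> T" for t
    using T(1)[OF that] backflow_le[OF T(2)[OF that] \<open>\<delta> \<ge> 0\<close>] edges_le_n by linarith
  then show ?thesis by blast
qed

lemma eventual_rate_lower_bound:
  assumes "\<exists>T. \<forall>t\<ge>T. q t a - q t b \<ge> Dbar"
  shows "\<exists>T. \<forall>t\<ge>T. (q t a - q t b) - path_L L P + 2 * backflow (q t) P \<ge> Dbar - path_L L P"
proof -
  obtain T where T: "\<And>t. t \<ge> T \<Longrightarrow> q t a - q t b \<ge> Dbar" using assms by blast
  have "(q t a - q t b) - path_L L P + 2 * backflow (q t) P \<ge> Dbar - path_L L P" if "t \<ge> T" for t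
    using T[OF that] backflow_nonneg[of "q t" P] by linarith
  then show ?thesis by blast
qed

section \<open>Physarum dynamics on a single edge\<close>

lemma abs_current_edge:
  assumes "orient e \<in> {(u, v). e = {u, v}}" and "e = {x, y}"
    and "L e > 0" and "D e > 0"
  shows "\<bar>current L D q orient e\<bar> = \<bar>q x - q y\<bar> * D e / L e"
proof -
  obtain u v where uv: "orient e = (u, v)" "e = {u, v}" using assms(1) by auto
  have "\<bar>q u - q v\<bar> = \<bar>q x - q y\<bar>"
    using uv(2) \<open>e = {x, y}\<close> by (auto simp: doubleton_eq_iff abs_minus_commute)
  then show ?thesis
    using assms(3,4) by (simp add: current_def resistance_def uv(1) abs_divide abs_mult)
qed

(* Key computation: (L_e ln D_e)' = L_e (|Q_e| - D_e)/D_e = |q x - q y| - L_e. *)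
lemma weighted_log_diameter_deriv:
  assumes dyn: "((\<lambda>s. D s e) has_real_derivative
                 (\<bar>current L (D t) (q t) orient e\<bar> - D t e)) (at t within {0..})"
    and orient: "orient e \<in> {(u, v). e = {u, v}}" and e: "e = {x, y}"
    and L_pos: "L e > 0" and D_pos: "D t e > 0"
  shows "((\<lambda>s. L e * ln (D s e)) has_real_derivative (\<bar>q t x - q t y\<bar> - L e))
           (at t within {0..})"
proof -
  have "((\<lambda>s. D s e) has_real_derivative (\<bar>q t x - q t y\<bar> * D t e / L e - D t e))
          (at t within {0..})"
  proof -
    have "\<bar>current L (D t) (q t) orient e\<bar> = \<bar>q t x - q t y\<bar> * D t e / L e"
      by (rule abs_current_edge[of orient e x y L "D t", OF orient e L_pos D_pos])
    then show ?thesis using dyn by simp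
  qed
  note chain = DERIV_cmult[OF DERIV_chain2[OF DERIV_ln_divide[OF D_pos] this], of "L e"]
  have "L e * (1 / D t e * (\<bar>q t x - q t y\<bar> * D t e / L e - D t e)) = \<bar>q t x - q t y\<bar> - L e"
    using L_pos D_pos by (simp add: field_simps)
  then show ?thesis using chain by (simp add: o_def)
qed

lemma path_W_deriv:
  assumes L_pos: "\<forall>e\<in>E. L e > 0"
    and D0_pos: "\<forall>e\<in>E. D 0 e > 0"
    and orient: "\<forall>e\<in>E. orient e \<in> {(u, v). e = {u, v}}"
    and dyn: "\<forall>e\<in>E. \<forall>t\<ge>0. ((\<lambda>s. D s e) has_real_derivative
                 (\<bar>current L (D t) (p t) orient e\<bar> - D t e)) (at t within {0..})"
    and path: "is_path E P a b"
    and "t \<ge> 0"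
  shows "((\<lambda>s. path_W L (D s) P) has_real_derivative
           ((p t a - p t b) - path_L L P + 2 * backflow (p t) P)) (at t within {0..})"
proof -
  have D_pos: "D t e > 0" if e_in_E: "e \<in> E" for e
  proof (rule positive_under_relaxation[where f = "\<lambda>s. D s e"
                                          and g = "\<lambda>s. \<bar>current L (D s) (p s) orient e\<bar>"])
    show "D 0 e > 0" using D0_pos e_in_E by (rule bspec)
    show "((\<lambda>s. D s e) has_real_derivative (\<bar>current L (D x) (p x) orient e\<bar> - D x e))
            (at x within {0..})" if "x \<ge> 0" for x
      using dyn[rule_format, OF e_in_E that] .
  qed (use \<open>t \<ge> 0\<close> in simp_all)
  have edge_deriv: "((\<lambda>s. L (path_edge P i) * ln (D s (path_edge P i))) has_real_derivative
        (\<bar>edge_delta (p t) P i\<bar> - L (path_edge P i))) (at t within {0..})"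
    if i: "i < length P - 1" for i
  proof -
    define e where "e = path_edge P i"
    have e_in_E: "e \<in> E" using path i by (simp add: is_path_def path_edge_def e_def)
    have dyn_e: "((\<lambda>s. D s e) has_real_derivative
                 (\<bar>current L (D t) (p t) orient e\<bar> - D t e)) (at t within {0..})"
      using dyn[rule_format, OF e_in_E \<open>t \<ge> 0\<close>] .
    have orient_e: "orient e \<in> {(u, v). e = {u, v}}" using orient e_in_E by (rule bspec)
    have "((\<lambda>s. L e * ln (D s e)) has_real_derivative
            (\<bar>p t (P ! i) - p t (P ! Suc i)\<bar> - L e)) (at t within {0..})"
    proof (rule weighted_log_diameter_deriv[where D = D and e = e and L = L and t = t and q = p
                and orient = orient and x = "P ! i" and y = "P ! Suc i", OF dyn_e orient_e])
      show "e = {P ! i, P ! Suc i}" by (simp add: e_def path_edge_def)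
      show "L e > 0" using L_pos e_in_E by (rule bspec)
      show "D t e > 0" using e_in_E by (rule D_pos)
    qed
    then show ?thesis by (simp add: e_def edge_delta_def)
  qed
  have "((\<lambda>s. path_W L (D s) P) has_real_derivative
          (\<Sum>i < length P - 1. \<bar>edge_delta (p t) P i\<bar> - L (path_edge P i))) (at t within {0..})"
    unfolding path_W_def by (rule DERIV_sum) (use edge_deriv in auto)
  moreover have "(\<Sum>i < length P - 1. \<bar>edge_delta (p t) P i\<bar> - L (path_edge P i))
      = (p t a - p t b) - path_L L P + 2 * backflow (p t) P"
    using sum_abs_edge_delta[OF path, of "p t"] unfolding sum_subtractf path_L_def by linarith
  ultimately show ?thesis by simp
qed

theorem mainTheorem11:
  fixes N :: "'v set" and E :: "'v set set" and s0 s1 a b :: 'v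
    and L :: "'v set \<Rightarrow> real" and D :: "real \<Rightarrow> 'v set \<Rightarrow> real"
    and p :: "real \<Rightarrow> 'v \<Rightarrow> real" and orient :: "'v set \<Rightarrow> 'v \<times> 'v"
    and P :: "'v list"
  assumes graph: "graph_ok N E s0 s1"
    and L_pos: "\<forall>e\<in>E. L e > 0"
    and D0_pos: "\<forall>e\<in>E. D 0 e > 0"
    and orient: "\<forall>e\<in>E. orient e \<in> {(u, v). e = {u, v}}"
    and pot: "\<forall>t\<ge>0. is_potential N E L (D t) s0 s1 (p t)"
    and dyn: "\<forall>e\<in>E. \<forall>t\<ge>0. ((\<lambda>s. D s e) has_real_derivative
                 (\<bar>current L (D t) (p t) orient e\<bar> - D t e)) (at t within {0..})"
    and path: "is_path E P a b"
  shows
    "(\<forall>t\<ge>0. ((\<lambda>s. path_W L (D s) P) has_real_derivative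
        ((p t a - p t b) - path_L L P
          + 2 * (\<Sum>i\<in>{i. i < length P - 1 \<and> edge_delta (p t) P i < 0}. \<bar>edge_delta (p t) P i\<bar>)))
        (at t within {0..}))
   \<and> (\<forall>Dbar \<delta>::real. \<delta> \<ge> 0 \<longrightarrow>
        (\<exists>T. \<forall>t\<ge>T. p t a - p t b \<le> Dbar \<and> (\<forall>i < length P - 1. edge_delta (p t) P i \<ge> - \<delta>)) \<longrightarrow>
        (\<exists>K. \<forall>t\<ge>0. path_W L (D t) P \<le> K + (Dbar - path_L L P + 2 * real (card N) * \<delta>) * t))
   \<and> (\<forall>Dbar::real.
        (\<exists>T. \<forall>t\<ge>T. p t a - p t b \<ge> Dbar) \<longrightarrow>
        (\<exists>K. \<forall>t\<ge>0. path_W L (D t) P \<ge> K + (Dbar - path_L L P) * t))"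
proof -
  have deriv: "((\<lambda>s. path_W L (D s) P) has_real_derivative
                  ((p t a - p t b) - path_L L P + 2 * backflow (p t) P)) (at t within {0..})"
    if "t \<ge> 0" for t
    by (rule path_W_deriv[OF L_pos D0_pos orient dyn path that])
  have rate_formula: "\<forall>t\<ge>0. ((\<lambda>s. path_W L (D s) P) has_real_derivative
        ((p t a - p t b) - path_L L P
          + 2 * (\<Sum>i\<in>{i. i < length P - 1 \<and> edge_delta (p t) P i < 0}. \<bar>edge_delta (p t) P i\<bar>)))
        (at t within {0..})"
    using deriv by (simp add: backflow_def)
  have upper: "\<exists>K. \<forall>t\<ge>0. path_W L (D t) P \<le> K + (Dbar - path_L L P + 2 * real (card N) * \<delta>) * t"
    if "\<delta> \<ge> 0" and "\<exists>T. \<forall>t\<ge>T. p t a - p t b \<le> Dbar \<and>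
                             (\<forall>i < length P - 1. edge_delta (p t) P i \<ge> - \<delta>)" for Dbar \<delta> :: real
    by (rule affine_upper_bound_from_eventual_slope[OF deriv
                eventual_rate_upper_bound[OF graph path that]])
  have lower: "\<exists>K. \<forall>t\<ge>0. path_W L (D t) P \<ge> K + (Dbar - path_L L P) * t"
    if "\<exists>T. \<forall>t\<ge>T. p t a - p t b \<ge> Dbar" for Dbar :: real
    by (rule affine_lower_bound_from_eventual_slope[OF deriv eventual_rate_lower_bound[OF that]])
  show ?thesis using rate_formula upper lower by blast
qed

end
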